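(* Let $d\in\mathbb{N}$ and $n\geq 3$, and let $k$ be a nonnegative integer with $k\leq \frac{n}{10^4 d^3}$. Let $G$ and $H$ be graphs on $n$ vertices, each with average degree at most $d$. Suppose $G$ and $H$ share $n-k$ cards, i.e. there are distinct vertices $u_1,\dots,u_{n-k}$ of $G$ and distinct vertices $w_1,\dots,w_{n-k}$ of $H$ such that $G-u_i\cong H-w_i$ for every $i\in[n-k]$. Then $G$ and $H$ have the same degree sequence. (That is, the degree sequence of a graph with average degree at most $d$ can be reconstructed from its deck when at most $\frac{n}{10^4d^3}$ of the cards are missing.) *)

theory Defs
  imports Complex_Main "HOL-Library.Multiset"
begin

definition simple_graph :: "'a set \<Rightarrow> 'a set set \<Rightarrow> bool" where
  "simple_graph V E \<longleftrightarrow> finite V \<and>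
     (\<forall>e\<in>E. \<exists>x y. x \<noteq> y \<and> x \<in> V \<and> y \<in> V \<and> e = {x, y})"

definition deg :: "'a set \<Rightarrow> 'a set set \<Rightarrow> 'a \<Rightarrow> nat" where
  "deg V E v = card {u \<in> V. {u, v} \<in> E}"

definition degree_seq :: "'a set \<Rightarrow> 'a set set \<Rightarrow> nat multiset" where
  "degree_seq V E = image_mset (deg V E) (mset_set V)"

definition del_vert_V :: "'a set \<Rightarrow> 'a \<Rightarrow> 'a set" where
  "del_vert_V V u = V - {u}"

definition del_vert_E :: "'a set set \<Rightarrow> 'a \<Rightarrow> 'a set set" where
  "del_vert_E E u = {e \<in> E. u \<notin> e}"

definition graph_iso :: "'a set \<Rightarrow> 'a set set \<Rightarrow> 'b set \<Rightarrow> 'b set set \<Rightarrow> bool" where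
  "graph_iso V E V' E' \<longleftrightarrow> (\<exists>f. bij_betw f V V' \<and>
     (\<forall>x\<in>V. \<forall>y\<in>V. {x, y} \<in> E \<longleftrightarrow> {f x, f y} \<in> E'))"

end

theory Submission
  imports Defs
begin

text \<open>
  Counting edges on a common card \<open>G - u \<cong> H - w\<close> gives \<open>e(G) - deg u = e(H) - deg w\<close>, so
  \<open>deg u\<^sub>i - deg w\<^sub>i\<close> is a constant \<open>t\<close> over the \<open>n - k\<close> shared cards. Summing, \<open>(n - k - 2) t\<close>
  is the difference of the degree sums of the \<open>k\<close> missing vertices; comparing the excesses of all
  degrees over \<open>4 d\<close> through a card of small degree bounds that difference by roughly
  \<open>|t| n / 2 + 10 k d\<close>, whence \<open>t = 0\<close>.

  Next let \<open>\<gamma>(T)\<close> be the difference between the numbers of vertices of degree at least \<open>T\<close>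
  in \<open>G\<close> and \<open>H\<close>. A card determines this number up to the number of neighbours of degree
  \<open>T\<close> of the deleted vertex; summing over the cards and double counting yields
  \<open>(n - k) \<gamma>(T) = T (\<gamma>(T) - \<gamma>(T + 1)) + \<epsilon>\<close> with \<open>|T \<epsilon>| \<le> k d n\<close>. Downward induction from
  \<open>T = n\<close> gives \<open>\<gamma> = 0\<close>: in the middle range the recurrence suffices; for small \<open>T\<close> only
  vertices of degree at least \<open>8 d\<close> are counted; for \<open>T\<close> close to \<open>n\<close> a card vertex adjacent
  to all vertices of degree \<open>T\<close> shows \<open>\<gamma>(T + 1) = 0\<close> directly.
\<close>

section \<open>Neighbourhoods and degree counts\<close>

definition nbhd :: "'a set \<Rightarrow> 'a set set \<Rightarrow> 'a \<Rightarrow> 'a set" where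
  "nbhd V E x = {y\<in>V. {y, x} \<in> E}"

definition deg_ge_count :: "'a set \<Rightarrow> 'a set set \<Rightarrow> nat \<Rightarrow> nat" where
  "deg_ge_count V E T = card {x\<in>V. T \<le> deg V E x}"

definition deg_count :: "'a set \<Rightarrow> 'a set set \<Rightarrow> nat \<Rightarrow> nat" where
  "deg_count V E T = card {x\<in>V. deg V E x = T}"

definition nbhd_deg_count :: "'a set \<Rightarrow> 'a set set \<Rightarrow> nat \<Rightarrow> 'a \<Rightarrow> nat" where
  "nbhd_deg_count V E T x = card {z\<in>nbhd V E x. deg V E z = T}"

lemma deg_eq_card_nbhd: "deg V E x = card (nbhd V E x)"
  by (simp add: deg_def nbhd_def)

lemma nbhd_subset: "nbhd V E x \<subseteq> V"
  by (auto simp: nbhd_def)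

lemma nbhd_sym: "x \<in> V \<Longrightarrow> y \<in> V \<Longrightarrow> y \<in> nbhd V E x \<longleftrightarrow> x \<in> nbhd V E y"
  by (auto simp: nbhd_def insert_commute)

lemma card_filter_eq_sum: "finite A \<Longrightarrow> card {x\<in>A. P x} = (\<Sum>x\<in>A. of_bool (P x) :: nat)"
  by (simp add: sum.If_cases Int_def)

lemma card_remove_filter:
  assumes "finite B"
  shows "card {z\<in>B. p z} = card {z\<in>B - {u}. p z} + of_bool (u \<in> B \<and> p u)"
proof (cases "u \<in> B \<and> p u")
  case True
  then have "{z\<in>B. p z} = insert u {z\<in>B - {u}. p z}" by blast
  then show ?thesis using assms True by simp
next
  case False
  then have "{z\<in>B. p z} = {z\<in>B - {u}. p z}" by blast
  then show ?thesis using False by simp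
qed

lemma abs_card_filter_diff_le:
  assumes "finite A"
  shows "\<bar>int (card {z\<in>A. p z}) - int (card {z\<in>A. q z})\<bar> \<le> int (card {z\<in>A. p z \<noteq> q z})"
proof -
  have "card {z\<in>A. p z} \<le> card {z\<in>A. q z} + card {z\<in>A. p z \<noteq> q z}"
       "card {z\<in>A. q z} \<le> card {z\<in>A. p z} + card {z\<in>A. p z \<noteq> q z}"
    by (rule order.trans[OF card_mono card_Un_le]; use assms in auto)+
  then show ?thesis by linarith
qed

context
  fixes V :: "'a set" and E :: "'a set set"
  assumes graph: "simple_graph V E"
begin

lemma finite_vertices: "finite V"
  using graph by (simp add: simple_graph_def)

lemma finite_nbhd: "finite (nbhd V E x)"
  using finite_subset[OF nbhd_subset finite_vertices] .

lemma not_in_nbhd_self: "x \<notin> nbhd V E x"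
  using graph by (force simp: nbhd_def simple_graph_def doubleton_eq_iff)

lemma deg_le_card_minus_one:
  assumes "x \<in> V"
  shows "deg V E x \<le> card V - 1"
proof -
  have "nbhd V E x \<subseteq> V - {x}"
    using nbhd_subset not_in_nbhd_self by fast
  then have "card (nbhd V E x) \<le> card (V - {x})"
    using finite_vertices by (intro card_mono) auto
  then show ?thesis
    using assms finite_vertices by (simp add: deg_eq_card_nbhd)
qed

lemma sum_card_nbhd_filter:
  "(\<Sum>x\<in>V. card {z\<in>nbhd V E x. P z}) = (\<Sum>z\<in>{z\<in>V. P z}. deg V E z)"
proof -
  have "(\<Sum>x\<in>V. card {z\<in>nbhd V E x. P z}) = (\<Sum>x\<in>V. \<Sum>z\<in>V. of_bool ({z, x} \<in> E \<and> P z))"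
    by (intro sum.cong refl) (simp add: nbhd_def card_filter_eq_sum[OF finite_vertices, symmetric])
  also have "\<dots> = (\<Sum>z\<in>V. \<Sum>x\<in>V. of_bool ({z, x} \<in> E \<and> P z))"
    by (rule sum.swap)
  also have "\<dots> = (\<Sum>z\<in>V. if P z then deg V E z else 0)"
    by (intro sum.cong refl)
       (simp add: deg_def insert_commute card_filter_eq_sum[OF finite_vertices, symmetric])
  also have "\<dots> = (\<Sum>z\<in>{z\<in>V. P z}. deg V E z)"
    using finite_vertices by (simp add: sum.If_cases Int_def)
  finally show ?thesis .
qed

lemma sum_nbhd_deg_count: "(\<Sum>x\<in>V. nbhd_deg_count V E T x) = T * deg_count V E T"
  using sum_card_nbhd_filter[of "\<lambda>z. deg V E z = T"]
  by (simp add: nbhd_deg_count_def deg_count_def)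

lemma nbhd_deg_count_le_deg: "nbhd_deg_count V E T x \<le> deg V E x"
  unfolding nbhd_deg_count_def deg_eq_card_nbhd using finite_nbhd by (intro card_mono) auto

lemma nbhd_deg_count_le_deg_count: "nbhd_deg_count V E T x \<le> deg_count V E T"
  unfolding nbhd_deg_count_def deg_count_def
  using finite_vertices nbhd_subset[of V E x] by (intro card_mono) auto

lemma deg_ge_count_bound: "T * deg_ge_count V E T \<le> (\<Sum>x\<in>V. deg V E x)"
proof -
  have "T * deg_ge_count V E T = (\<Sum>x\<in>{x\<in>V. T \<le> deg V E x}. T)"
    by (simp add: deg_ge_count_def)
  also have "\<dots> \<le> (\<Sum>x\<in>{x\<in>V. T \<le> deg V E x}. deg V E x)"
    by (intro sum_mono) auto
  also have "\<dots> \<le> (\<Sum>x\<in>V. deg V E x)"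
    using finite_vertices by (intro sum_mono2) auto
  finally show ?thesis .
qed

lemma deg_count_bound: "T * deg_count V E T \<le> (\<Sum>x\<in>V. deg V E x)"
proof -
  have "T * deg_count V E T = (\<Sum>x\<in>{x\<in>V. deg V E x = T}. deg V E x)"
    by (simp add: deg_count_def)
  also have "\<dots> \<le> (\<Sum>x\<in>V. deg V E x)"
    using finite_vertices by (intro sum_mono2) auto
  finally show ?thesis .
qed

lemma deg_ge_count_Suc: "deg_ge_count V E T = deg_count V E T + deg_ge_count V E (Suc T)"
proof -
  have "{x\<in>V. T \<le> deg V E x} = {x\<in>V. deg V E x = T} \<union> {x\<in>V. Suc T \<le> deg V E x}"
    by auto
  then show ?thesis
    unfolding deg_ge_count_def deg_count_def using finite_vertices
    by (simp add: card_Un_disjoint disjoint_iff)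
qed

lemma deg_ge_count_eq_0:
  assumes "card V \<le> T"
  shows "deg_ge_count V E T = 0"
proof -
  have "T \<le> deg V E x \<Longrightarrow> x \<notin> V" for x
    using deg_le_card_minus_one[of x] assms finite_vertices card_gt_0_iff[of V] by fastforce
  then have "{x\<in>V. T \<le> deg V E x} = {}" by blast
  then show ?thesis unfolding deg_ge_count_def by (simp only: card.empty)
qed

lemma count_degree_seq: "count (degree_seq V E) T = deg_count V E T"
  using finite_vertices by (simp add: degree_seq_def deg_count_def count_image_mset Int_def conj_commute)

lemma nbhd_deg_count_eq_deg_count:
  assumes "x \<in> V" and "\<And>z. z \<in> V \<Longrightarrow> deg V E z = T \<Longrightarrow> x \<in> nbhd V E z"
  shows "nbhd_deg_count V E T x = deg_count V E T"
proof -
  have "{z\<in>nbhd V E x. deg V E z = T} = {z\<in>V. deg V E z = T}"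
    using assms nbhd_subset[of V E x] nbhd_sym[OF assms(1)] by blast
  then show ?thesis
    by (simp add: nbhd_deg_count_def deg_count_def)
qed

lemma card_nbhd_remove: "card (nbhd V E x - {u}) + of_bool (u \<in> nbhd V E x) = deg V E x"
proof (cases "u \<in> nbhd V E x")
  case True
  then have "card (nbhd V E x) \<ge> 1"
    using finite_nbhd[of x] card_gt_0_iff[of "nbhd V E x"] by fastforce
  then show ?thesis
    using True finite_nbhd[of x] by (simp add: deg_eq_card_nbhd card_Diff_singleton)
qed (simp add: deg_eq_card_nbhd)

lemma Collect_adjacent_eq_nbhd:
  assumes "u \<in> V"
  shows "{x\<in>V - {u}. u \<in> nbhd V E x \<and> Q x} = {z\<in>nbhd V E u. Q z}"
  using assms nbhd_sym[of _ V u E] nbhd_subset[of V E u] not_in_nbhd_self[of u] by blast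

lemma sum_adjacent:
  assumes "u \<in> V"
  shows "(\<Sum>x\<in>V - {u}. of_bool (u \<in> nbhd V E x) :: nat) = deg V E u"
proof -
  have "(\<Sum>x\<in>V - {u}. of_bool (u \<in> nbhd V E x) :: nat) = card {x\<in>V - {u}. u \<in> nbhd V E x}"
    using finite_vertices by (metis card_filter_eq_sum finite_Diff)
  also have "\<dots> = card (nbhd V E u)"
    using Collect_adjacent_eq_nbhd[OF assms, of "\<lambda>_. True"] by simp
  finally show ?thesis by (simp add: deg_eq_card_nbhd)
qed

text \<open>\<open>card (nbhd V E x - {u})\<close> is the degree of \<open>x\<close> in \<open>G - u\<close>; a vertex drops below \<open>T\<close>
  exactly when it is a neighbour of \<open>u\<close> of degree \<open>T\<close>.\<close>
lemma deg_ge_count_remove: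
  assumes u: "u \<in> V"
  shows "int (card {x\<in>V - {u}. T \<le> card (nbhd V E x - {u})})
       = int (deg_ge_count V E T) - of_bool (T \<le> deg V E u) - int (nbhd_deg_count V E T u)"
proof -
  define A where "A = {x\<in>V - {u}. T \<le> deg V E x}"
  define B where "B = {x\<in>V - {u}. T \<le> card (nbhd V E x - {u})}"
  define C where "C = {x\<in>V - {u}. u \<in> nbhd V E x \<and> deg V E x = T}"
  have "T \<le> deg V E x \<longleftrightarrow> T \<le> card (nbhd V E x - {u}) \<or> (u \<in> nbhd V E x \<and> deg V E x = T)"
    "\<not> (T \<le> card (nbhd V E x - {u}) \<and> u \<in> nbhd V E x \<and> deg V E x = T)" for x
    using card_nbhd_remove[of x u] by (cases "u \<in> nbhd V E x"; simp; linarith)+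
  then have "A = B \<union> C" "B \<inter> C = {}"
    unfolding A_def B_def C_def by blast+
  moreover have "finite B" "finite C"
    using finite_vertices unfolding B_def C_def by auto
  ultimately have "card A = card B + card C"
    by (simp add: card_Un_disjoint)
  moreover have "deg_ge_count V E T = card A + of_bool (T \<le> deg V E u)"
    unfolding deg_ge_count_def A_def
    using card_remove_filter[OF finite_vertices, of "\<lambda>x. T \<le> deg V E x" u] u by simp
  moreover have "C = {z\<in>nbhd V E u. deg V E z = T}"
    unfolding C_def by (rule Collect_adjacent_eq_nbhd[OF u])
  ultimately show ?thesis
    unfolding B_def nbhd_deg_count_def by simp
qed

end

lemma degree_seq_eqI:
  assumes "simple_graph V E" "simple_graph V' E'"
    and "\<And>T. deg_ge_count V E T = deg_ge_count V' E' T"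
  shows "degree_seq V E = degree_seq V' E'"
proof (rule multiset_eqI)
  fix T
  show "count (degree_seq V E) T = count (degree_seq V' E') T"
    using assms(3)[of T] assms(3)[of "Suc T"]
      deg_ge_count_Suc[OF assms(1), of T] deg_ge_count_Suc[OF assms(2), of T]
    by (simp add: count_degree_seq[OF assms(1)] count_degree_seq[OF assms(2)])
qed

lemma degree_seq_deg_sum_eq_0:
  assumes "simple_graph V E" and "(\<Sum>x\<in>V. deg V E x) = 0"
  shows "degree_seq V E = replicate_mset (card V) 0"
proof -
  have "degree_seq V E = image_mset (\<lambda>_. 0) (mset_set V)"
    using assms finite_vertices[OF assms(1)] unfolding degree_seq_def
    by (intro image_mset_cong) simp
  then show ?thesis
    by (simp add: image_mset_const_eq)
qed

section \<open>Two graphs with a common card\<close>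

definition trunc_nbhd_deg_count :: "'a set \<Rightarrow> 'a set set \<Rightarrow> nat \<Rightarrow> nat \<Rightarrow> 'a \<Rightarrow> nat" where
  "trunc_nbhd_deg_count V E Q T x = (if Q \<le> deg V E x then nbhd_deg_count V E T x else 0)"

locale card_iso =
  fixes V :: "'a set" and E :: "'a set set" and V' :: "'b set" and E' :: "'b set set"
    and u :: 'a and w :: 'b and f :: "'a \<Rightarrow> 'b"
  assumes graph: "simple_graph V E" and graph': "simple_graph V' E'"
    and u_in: "u \<in> V" and w_in: "w \<in> V'"
    and bij: "bij_betw f (V - {u}) (V' - {w})"
    and adj_iff: "x \<in> V - {u} \<Longrightarrow> y \<in> V - {u} \<Longrightarrow> {x, y} \<in> E \<longleftrightarrow> {f x, f y} \<in> E'"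

lemma graph_iso_imp_card_iso:
  assumes "simple_graph V E" "simple_graph V' E'" "u \<in> V" "w \<in> V'"
    and "graph_iso (del_vert_V V u) (del_vert_E E u) (del_vert_V V' w) (del_vert_E E' w)"
  obtains f where "card_iso V E V' E' u w f"
proof -
  obtain f where f: "bij_betw f (V - {u}) (V' - {w})"
    and adj: "\<forall>x\<in>V - {u}. \<forall>y\<in>V - {u}. {x, y} \<in> del_vert_E E u \<longleftrightarrow> {f x, f y} \<in> del_vert_E E' w"
    using assms(5) unfolding graph_iso_def del_vert_V_def by blast
  have "{x, y} \<in> E \<longleftrightarrow> {f x, f y} \<in> E'" if "x \<in> V - {u}" "y \<in> V - {u}" for x y
    using adj that bij_betwE[OF f] by (auto simp: del_vert_E_def)
  then show ?thesis
    by (rule that[OF card_iso.intro[OF assms(1-4) f]])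
qed

context card_iso
begin

lemma f_in: "x \<in> V - {u} \<Longrightarrow> f x \<in> V' - {w}"
  using bij bij_betwE by blast

lemma image_filter: "f ` {x\<in>V - {u}. P (f x)} = {y\<in>V' - {w}. P y}"
  using bij unfolding bij_betw_def by auto

lemma sum_reindex: "(\<Sum>x\<in>V - {u}. g (f x)) = (\<Sum>y\<in>V' - {w}. g y)"
  using sum.reindex_bij_betw[OF bij] by metis

lemma image_nbhd_filter:
  assumes x: "x \<in> V - {u}"
  shows "f ` {z\<in>nbhd V E x - {u}. P (f z)} = {y\<in>nbhd V' E' (f x) - {w}. P y}"
proof
  show "f ` {z\<in>nbhd V E x - {u}. P (f z)} \<subseteq> {y\<in>nbhd V' E' (f x) - {w}. P y}"
  proof
    fix y assume "y \<in> f ` {z\<in>nbhd V E x - {u}. P (f z)}"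
    then obtain z where z: "z \<in> nbhd V E x" "z \<noteq> u" "P (f z)" "y = f z" by auto
    then have z_in: "z \<in> V - {u}" using nbhd_subset[of V E x] by blast
    have "{z, x} \<in> E" using z by (simp add: nbhd_def)
    then have "{f z, f x} \<in> E'" using adj_iff z_in x by blast
    then show "y \<in> {y\<in>nbhd V' E' (f x) - {w}. P y}"
      using f_in[OF z_in] z by (auto simp: nbhd_def)
  qed
  show "{y\<in>nbhd V' E' (f x) - {w}. P y} \<subseteq> f ` {z\<in>nbhd V E x - {u}. P (f z)}"
  proof
    fix y assume y: "y \<in> {y\<in>nbhd V' E' (f x) - {w}. P y}"
    then have "y \<in> V' - {w}" using nbhd_subset[of V' E' "f x"] by blast
    then obtain z where z_in: "z \<in> V - {u}" and yz: "y = f z"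
      using bij by (metis bij_betw_imp_surj_on imageE)
    have "{f z, f x} \<in> E'" using y yz by (simp add: nbhd_def)
    then have "{z, x} \<in> E" using adj_iff z_in x by blast
    then show "y \<in> f ` {z\<in>nbhd V E x - {u}. P (f z)}"
      using z_in y yz by (auto simp: nbhd_def)
  qed
qed

lemma card_nbhd_filter:
  assumes x: "x \<in> V - {u}"
  shows "card {z\<in>nbhd V E x - {u}. P (f z)} = card {y\<in>nbhd V' E' (f x) - {w}. P y}"
proof -
  have "inj_on f {z\<in>nbhd V E x - {u}. P (f z)}"
    using bij nbhd_subset[of V E x] by (auto simp: bij_betw_def intro: inj_on_subset)
  then have "card (f ` {z\<in>nbhd V E x - {u}. P (f z)}) = card {z\<in>nbhd V E x - {u}. P (f z)}"
    by (rule card_image)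
  then show ?thesis
    by (simp only: image_nbhd_filter[OF x])
qed

lemma card_nbhd_remove_eq:
  assumes "x \<in> V - {u}"
  shows "card (nbhd V E x - {u}) = card (nbhd V' E' (f x) - {w})"
proof -
  have "{z\<in>nbhd V E x - {u}. True} = nbhd V E x - {u}"
    "{y\<in>nbhd V' E' (f x) - {w}. True} = nbhd V' E' (f x) - {w}"
    by auto
  then show ?thesis
    using card_nbhd_filter[OF assms, of "\<lambda>_. True"] by simp
qed

lemma deg_shift:
  assumes "x \<in> V - {u}"
  shows "deg V E x + of_bool (w \<in> nbhd V' E' (f x)) = deg V' E' (f x) + of_bool (u \<in> nbhd V E x)"
  using card_nbhd_remove_eq[OF assms] card_nbhd_remove[OF graph, of x u]
    card_nbhd_remove[OF graph', of "f x" w]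
  by linarith

lemma sum_adjacent_image: "(\<Sum>x\<in>V - {u}. of_bool (w \<in> nbhd V' E' (f x)) :: nat) = deg V' E' w"
  using sum_reindex[of "\<lambda>y. of_bool (w \<in> nbhd V' E' y) :: nat"] sum_adjacent[OF graph' w_in]
  by simp

lemma degree_sum_card:
  "int (\<Sum>x\<in>V. deg V E x) - 2 * int (deg V E u) = int (\<Sum>y\<in>V'. deg V' E' y) - 2 * int (deg V' E' w)"
proof -
  have "(\<Sum>x\<in>V - {u}. deg V E x + of_bool (w \<in> nbhd V' E' (f x)))
      = (\<Sum>x\<in>V - {u}. deg V' E' (f x) + of_bool (u \<in> nbhd V E x))"
    using deg_shift by (intro sum.cong) auto
  then have "(\<Sum>x\<in>V - {u}. deg V E x) + deg V' E' w = (\<Sum>y\<in>V' - {w}. deg V' E' y) + deg V E u"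
    by (simp only: sum.distrib sum_adjacent_image sum_adjacent[OF graph u_in] sum_reindex[of "deg V' E'"])
  moreover have "(\<Sum>x\<in>V. deg V E x) = deg V E u + (\<Sum>x\<in>V - {u}. deg V E x)"
    using finite_vertices[OF graph] u_in by (simp add: sum.remove)
  moreover have "(\<Sum>y\<in>V'. deg V' E' y) = deg V' E' w + (\<Sum>y\<in>V' - {w}. deg V' E' y)"
    using finite_vertices[OF graph'] w_in by (simp add: sum.remove)
  ultimately show ?thesis by linarith
qed

lemma deg_ge_count_card:
  "int (deg_ge_count V E T) - of_bool (T \<le> deg V E u) - int (nbhd_deg_count V E T u)
   = int (deg_ge_count V' E' T) - of_bool (T \<le> deg V' E' w) - int (nbhd_deg_count V' E' T w)"
proof -
  define S where "S = {x\<in>V - {u}. T \<le> card (nbhd V E x - {u})}"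
  have "S = {x\<in>V - {u}. T \<le> card (nbhd V' E' (f x) - {w})}"
    unfolding S_def using card_nbhd_remove_eq by (intro Collect_cong) auto
  then have "f ` S = {y\<in>V' - {w}. T \<le> card (nbhd V' E' y - {w})}"
    by (simp only: image_filter[of "\<lambda>y. T \<le> card (nbhd V' E' y - {w})"])
  moreover have "inj_on f S"
    using bij unfolding S_def bij_betw_def by (auto intro: inj_on_subset)
  ultimately have "card S = card {y\<in>V' - {w}. T \<le> card (nbhd V' E' y - {w})}"
    using card_image by fastforce
  then show ?thesis
    using deg_ge_count_remove[OF graph u_in, of T] deg_ge_count_remove[OF graph' w_in, of T]
    unfolding S_def by linarith
qed

definition adj_weight :: "'a \<Rightarrow> nat" where
  "adj_weight x = of_bool (u \<in> nbhd V E x) + of_bool (w \<in> nbhd V' E' (f x))"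

lemma sum_adj_weight: "(\<Sum>x\<in>V - {u}. adj_weight x) = deg V E u + deg V' E' w"
  unfolding adj_weight_def
  by (simp only: sum.distrib sum_adjacent[OF graph u_in] sum_adjacent_image)

lemma abs_deg_diff_le_adj_weight:
  "x \<in> V - {u} \<Longrightarrow> \<bar>int (deg V E x) - int (deg V' E' (f x))\<bar> \<le> int (adj_weight x)"
  using deg_shift[of x] unfolding adj_weight_def
  by (cases "u \<in> nbhd V E x"; cases "w \<in> nbhd V' E' (f x)") auto

lemma abs_deg_diff_le_1: "x \<in> V - {u} \<Longrightarrow> \<bar>int (deg V E x) - int (deg V' E' (f x))\<bar> \<le> 1"
  using deg_shift[of x] by (cases "u \<in> nbhd V E x"; cases "w \<in> nbhd V' E' (f x)") auto

lemma adj_weight_pos: "x \<in> V - {u} \<Longrightarrow> deg V E x \<noteq> deg V' E' (f x) \<Longrightarrow> 1 \<le> adj_weight x"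
  using deg_shift[of x] unfolding adj_weight_def
  by (cases "u \<in> nbhd V E x"; cases "w \<in> nbhd V' E' (f x)") auto

lemma sum_excess_transfer:
  assumes "deg V E u \<le> Q" and "deg V' E' w \<le> Q"
  shows "\<bar>int (\<Sum>x\<in>V. deg V E x - Q) - int (\<Sum>y\<in>V'. deg V' E' y - Q)\<bar>
          \<le> int (deg V E u + deg V' E' w)"
proof -
  have "(\<Sum>x\<in>V. deg V E x - Q) = (\<Sum>x\<in>V - {u}. deg V E x - Q)"
    using finite_vertices[OF graph] u_in assms(1) by (simp add: sum.remove)
  moreover have "(\<Sum>y\<in>V'. deg V' E' y - Q) = (\<Sum>x\<in>V - {u}. deg V' E' (f x) - Q)"
    using finite_vertices[OF graph'] w_in assms(2) sum_reindex[of "\<lambda>y. deg V' E' y - Q"]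
    by (simp add: sum.remove)
  moreover have "\<bar>\<Sum>x\<in>V - {u}. int (deg V E x - Q) - int (deg V' E' (f x) - Q)\<bar>
      \<le> (\<Sum>x\<in>V - {u}. \<bar>int (deg V E x - Q) - int (deg V' E' (f x) - Q)\<bar>)"
    by (rule sum_abs)
  moreover have "\<dots> \<le> (\<Sum>x\<in>V - {u}. int (adj_weight x))"
    using abs_deg_diff_le_adj_weight by (intro sum_mono) fastforce
  ultimately show ?thesis
    using sum_adj_weight by (simp add: sum_subtractf flip: of_nat_sum)
qed

definition deg_changed :: "nat \<Rightarrow> 'a set" where
  "deg_changed T = {z\<in>V - {u}. deg V E z \<noteq> deg V' E' (f z) \<and> (deg V E z = T \<or> deg V' E' (f z) = T)}"

lemma card_deg_changed: "card (deg_changed T) \<le> deg V E u + deg V' E' w"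
proof -
  have "card (deg_changed T) \<le> card {z\<in>V - {u}. 1 \<le> adj_weight z}"
    using adj_weight_pos finite_vertices[OF graph] unfolding deg_changed_def
    by (intro card_mono) auto
  also have "\<dots> = (\<Sum>z\<in>V - {u}. of_bool (1 \<le> adj_weight z))"
    using finite_vertices[OF graph] by (metis (no_types) card_filter_eq_sum finite_Diff)
  also have "\<dots> \<le> (\<Sum>z\<in>V - {u}. adj_weight z)"
    by (intro sum_mono) auto
  finally show ?thesis
    using sum_adj_weight by simp
qed

lemma deg_changed_le: "z \<in> deg_changed T \<Longrightarrow> deg V E z \<le> T + 1"
  using abs_deg_diff_le_1[of z] unfolding deg_changed_def by auto

lemma abs_nbhd_deg_count_diff_le:
  assumes x: "x \<in> V - {u}"
  shows "\<bar>int (nbhd_deg_count V E T x) - int (nbhd_deg_count V' E' T (f x))\<bar>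
    \<le> int (adj_weight x) + int (card {z\<in>nbhd V E x - {u}. z \<in> deg_changed T})"
proof -
  have fin: "finite (nbhd V E x - {u})"
    using finite_nbhd[OF graph] by blast
  have "card {z\<in>nbhd V E x - {u}. (deg V E z = T) \<noteq> (deg V' E' (f z) = T)}
      \<le> card {z\<in>nbhd V E x - {u}. z \<in> deg_changed T}"
    using fin nbhd_subset[of V E x] by (intro card_mono) (auto simp: deg_changed_def)
  moreover have "\<bar>int (card {z\<in>nbhd V E x - {u}. deg V E z = T})
      - int (card {z\<in>nbhd V E x - {u}. deg V' E' (f z) = T})\<bar>
      \<le> int (card {z\<in>nbhd V E x - {u}. (deg V E z = T) \<noteq> (deg V' E' (f z) = T)})"
    by (rule abs_card_filter_diff_le[OF fin])
  moreover have "nbhd_deg_count V E T x = card {z\<in>nbhd V E x - {u}. deg V E z = T}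
      + of_bool (u \<in> nbhd V E x \<and> deg V E u = T)"
    unfolding nbhd_deg_count_def by (rule card_remove_filter[OF finite_nbhd[OF graph]])
  moreover have "nbhd_deg_count V' E' T (f x) = card {z\<in>nbhd V E x - {u}. deg V' E' (f z) = T}
      + of_bool (w \<in> nbhd V' E' (f x) \<and> deg V' E' w = T)"
    unfolding nbhd_deg_count_def card_nbhd_filter[OF x, of "\<lambda>y. deg V' E' y = T"]
    by (rule card_remove_filter[OF finite_nbhd[OF graph']])
  ultimately show ?thesis
    unfolding adj_weight_def
    by (cases "u \<in> nbhd V E x"; cases "w \<in> nbhd V' E' (f x)"; simp; linarith)
qed

lemma abs_trunc_nbhd_deg_count_diff_le:
  assumes x: "x \<in> V - {u}"
  shows "\<bar>int (trunc_nbhd_deg_count V E Q T x) - int (trunc_nbhd_deg_count V' E' Q T (f x))\<bar>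
    \<le> int ((Q + 1) * adj_weight x) + int (card {z\<in>nbhd V E x - {u}. z \<in> deg_changed T})"
proof (cases "Q \<le> deg V E x \<longleftrightarrow> Q \<le> deg V' E' (f x)")
  case True
  show ?thesis
  proof (cases "Q \<le> deg V E x")
    case high: True
    have "int (adj_weight x) \<le> int ((Q + 1) * adj_weight x)"
      by simp
    moreover have "trunc_nbhd_deg_count V E Q T x = nbhd_deg_count V E T x"
      "trunc_nbhd_deg_count V' E' Q T (f x) = nbhd_deg_count V' E' T (f x)"
      using True high unfolding trunc_nbhd_deg_count_def by simp_all
    ultimately show ?thesis
      using abs_nbhd_deg_count_diff_le[OF x, of T] by linarith
  next
    case False
    with True show ?thesis
      unfolding trunc_nbhd_deg_count_def by simp
  qed
next
  text \<open>Exactly one side reaches the threshold: both degrees are then at most \<open>Q\<close>, and they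
    differ, so \<open>x\<close> is adjacent to \<open>u\<close> or \<open>w\<close>.\<close>
  case False
  then have "1 \<le> adj_weight x"
    by (intro adj_weight_pos[OF x]) auto
  then have "Q * 1 \<le> (Q + 1) * adj_weight x"
    by (intro mult_le_mono) simp_all
  then have "int Q \<le> int ((Q + 1) * adj_weight x)"
    by linarith
  moreover have "deg V E x \<le> Q" "deg V' E' (f x) \<le> Q"
    using False abs_deg_diff_le_1[OF x] by linarith+
  ultimately show ?thesis
    using False nbhd_deg_count_le_deg[OF graph, of T x] nbhd_deg_count_le_deg[OF graph', of T "f x"]
    unfolding trunc_nbhd_deg_count_def by (cases "Q \<le> deg V E x") simp_all
qed

lemma sum_card_nbhd_deg_changed_le:
  "(\<Sum>x\<in>V - {u}. card {z\<in>nbhd V E x - {u}. z \<in> deg_changed T}) \<le> (deg V E u + deg V' E' w) * (T + 1)"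
proof -
  have "(\<Sum>x\<in>V - {u}. card {z\<in>nbhd V E x - {u}. z \<in> deg_changed T})
      \<le> (\<Sum>x\<in>V - {u}. card {z\<in>nbhd V E x. z \<in> deg_changed T})"
    using finite_nbhd[OF graph] by (intro sum_mono card_mono) auto
  also have "\<dots> \<le> (\<Sum>x\<in>V. card {z\<in>nbhd V E x. z \<in> deg_changed T})"
    using finite_vertices[OF graph] by (intro sum_mono2) auto
  also have "\<dots> = (\<Sum>z\<in>{z\<in>V. z \<in> deg_changed T}. deg V E z)"
    by (rule sum_card_nbhd_filter[OF graph])
  also have "\<dots> \<le> (\<Sum>z\<in>{z\<in>V. z \<in> deg_changed T}. T + 1)"
    using deg_changed_le by (intro sum_mono) auto
  also have "\<dots> = card {z\<in>V. z \<in> deg_changed T} * (T + 1)"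
    by simp
  also have "\<dots> \<le> (deg V E u + deg V' E' w) * (T + 1)"
  proof -
    have "card {z\<in>V. z \<in> deg_changed T} \<le> card (deg_changed T)"
      using finite_vertices[OF graph] unfolding deg_changed_def by (intro card_mono) auto
    then show ?thesis
      using card_deg_changed by (meson le_trans mult_le_mono1)
  qed
  finally show ?thesis .
qed

lemma sum_trunc_nbhd_deg_count_transfer:
  assumes "deg V E u < Q" and "deg V' E' w < Q"
  shows "\<bar>int (\<Sum>x\<in>V. trunc_nbhd_deg_count V E Q T x) - int (\<Sum>y\<in>V'. trunc_nbhd_deg_count V' E' Q T y)\<bar>
          \<le> int ((deg V E u + deg V' E' w) * (Q + T + 2))"
proof -
  define c where "c x = card {z\<in>nbhd V E x - {u}. z \<in> deg_changed T}" for x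
  have c_le: "int (\<Sum>x\<in>V - {u}. c x) \<le> int ((deg V E u + deg V' E' w) * (T + 1))"
    unfolding c_def of_nat_le_iff by (rule sum_card_nbhd_deg_changed_le)
  have "(\<Sum>x\<in>V. trunc_nbhd_deg_count V E Q T x) = (\<Sum>x\<in>V - {u}. trunc_nbhd_deg_count V E Q T x)"
    using finite_vertices[OF graph] u_in assms(1) by (simp add: sum.remove trunc_nbhd_deg_count_def)
  moreover have "(\<Sum>y\<in>V'. trunc_nbhd_deg_count V' E' Q T y)
      = (\<Sum>x\<in>V - {u}. trunc_nbhd_deg_count V' E' Q T (f x))"
    using finite_vertices[OF graph'] w_in assms(2) sum_reindex[of "trunc_nbhd_deg_count V' E' Q T"]
    by (simp add: sum.remove trunc_nbhd_deg_count_def)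
  moreover have "\<bar>int (\<Sum>x\<in>V - {u}. trunc_nbhd_deg_count V E Q T x)
      - int (\<Sum>x\<in>V - {u}. trunc_nbhd_deg_count V' E' Q T (f x))\<bar>
      \<le> int ((Q + 1) * (deg V E u + deg V' E' w)) + int (\<Sum>x\<in>V - {u}. c x)"
  proof -
    have "\<bar>int (\<Sum>x\<in>V - {u}. trunc_nbhd_deg_count V E Q T x)
        - int (\<Sum>x\<in>V - {u}. trunc_nbhd_deg_count V' E' Q T (f x))\<bar>
        = \<bar>\<Sum>x\<in>V - {u}. int (trunc_nbhd_deg_count V E Q T x) - int (trunc_nbhd_deg_count V' E' Q T (f x))\<bar>"
      by (simp add: sum_subtractf)
    also have "\<dots> \<le> (\<Sum>x\<in>V - {u}. \<bar>int (trunc_nbhd_deg_count V E Q T x) - int (trunc_nbhd_deg_count V' E' Q T (f x))\<bar>)"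
      by (rule sum_abs)
    also have "\<dots> \<le> (\<Sum>x\<in>V - {u}. int ((Q + 1) * adj_weight x) + int (c x))"
      unfolding c_def by (intro sum_mono abs_trunc_nbhd_deg_count_diff_le)
    also have "\<dots> = int ((Q + 1) * (\<Sum>x\<in>V - {u}. adj_weight x)) + int (\<Sum>x\<in>V - {u}. c x)"
      by (simp add: sum.distrib sum_distrib_left)
    finally show ?thesis
      by (simp only: sum_adj_weight)
  qed
  moreover have "int ((Q + 1) * (deg V E u + deg V' E' w)) + int ((deg V E u + deg V' E' w) * (T + 1))
      = int ((deg V E u + deg V' E' w) * (Q + T + 2))"
    by (simp add: algebra_simps)
  ultimately show ?thesis
    using c_le by linarith
qed

end

section \<open>A graph with an enumerated part of its deck\<close>

locale partial_deck =
  fixes V :: "'a set" and E :: "'a set set" and n k d :: nat and u :: "nat \<Rightarrow> 'a"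
  assumes graph: "simple_graph V E" and card_V: "card V = n" and k_le_n: "k \<le> n"
    and deg_sum_le: "(\<Sum>x\<in>V. deg V E x) \<le> d * n"
    and inj_u: "inj_on u {..<n - k}" and u_in: "u ` {..<n - k} \<subseteq> V"
begin

definition missing :: "'a set" where
  "missing = V - u ` {..<n - k}"

lemma finite_missing: "finite missing"
  using finite_vertices[OF graph] by (simp add: missing_def)

lemma card_missing: "card missing = k"
  using card_Diff_subset[OF _ u_in] card_image[OF inj_u] card_V k_le_n
  by (simp add: missing_def)

lemma sum_split: "(\<Sum>x\<in>V. g x) = (\<Sum>j<n - k. g (u j)) + (\<Sum>x\<in>missing. g x)"
  using sum.subset_diff[OF u_in finite_vertices[OF graph], of g] sum.reindex[OF inj_u, of g]
  by (simp add: missing_def add.commute)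

lemma card_cards_le: "card {j\<in>{..<n - k}. P (u j)} \<le> card {x\<in>V. P x}"
proof -
  have "inj_on u {j\<in>{..<n - k}. P (u j)}"
    using inj_u by (rule inj_on_subset) auto
  moreover have "u ` {j\<in>{..<n - k}. P (u j)} \<subseteq> {x\<in>V. P x}"
    using u_in by auto
  ultimately show ?thesis
    using card_mono[OF _ \<open>u ` _ \<subseteq> _\<close>] finite_vertices[OF graph] card_image by fastforce
qed

lemma card_cards_deg_ge: "Q * card {j\<in>{..<n - k}. Q \<le> deg V E (u j)} \<le> d * n"
  using mult_le_mono2[OF card_cards_le[of "\<lambda>x. Q \<le> deg V E x"], of Q]
    deg_ge_count_bound[OF graph, of Q] deg_sum_le
  unfolding deg_ge_count_def by linarith

lemma card_cards_deg_gt: "c * card {j\<in>{..<n - k}. c * d < deg V E (u j)} \<le> n"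
proof -
  define m where "m = card {j\<in>{..<n - k}. c * d < deg V E (u j)}"
  have "(c * d + 1) * m \<le> d * n"
    using card_cards_deg_ge[of "c * d + 1"] by (simp add: m_def Suc_le_eq)
  then have le: "d * (c * m) + m \<le> d * n"
    by (simp add: algebra_simps)
  show ?thesis
  proof (cases "d = 0")
    case True
    with le have "m = 0" by simp
    then show ?thesis by (simp only: m_def[symmetric])
  next
    case False
    with le have "d * (c * m) \<le> d * n" by linarith
    with False show ?thesis by (simp add: m_def)
  qed
qed

lemma deg_count_le: "T * deg_count V E T \<le> d * n"
  using deg_count_bound[OF graph, of T] deg_sum_le by linarith

lemma deg_count_le_2d:
  assumes "n < 2 * T"
  shows "deg_count V E T \<le> 2 * d"
proof (rule ccontr)
  assume "\<not> deg_count V E T \<le> 2 * d"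
  then have "(2 * d + 1) * T \<le> deg_count V E T * T"
    by (intro mult_le_mono1) simp
  moreover have "d * (n + 1) \<le> d * (2 * T)"
    using assms by (intro mult_le_mono2) simp
  ultimately show False
    using deg_count_le[of T] assms by (simp add: algebra_simps)
qed

lemma sum_missing_nbhd_deg_count_le: "(\<Sum>x\<in>missing. nbhd_deg_count V E T x) \<le> k * deg_count V E T"
  using sum_mono[of missing "nbhd_deg_count V E T" "\<lambda>_. deg_count V E T"]
    nbhd_deg_count_le_deg_count[OF graph] card_missing
  by simp

lemma sum_missing_nbhd_deg_count_mult_le:
  "T * (\<Sum>x\<in>missing. nbhd_deg_count V E T x) \<le> k * (d * n)"
proof -
  have "T * (\<Sum>x\<in>missing. nbhd_deg_count V E T x) \<le> k * (T * deg_count V E T)"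
    using mult_le_mono2[OF sum_missing_nbhd_deg_count_le, of T] by (simp add: algebra_simps)
  also have "\<dots> \<le> k * (d * n)"
    using deg_count_le by simp
  finally show ?thesis .
qed

lemma sum_missing_le_sum_diff:
  assumes "\<And>x. g x \<le> h x + Q"
  shows "(\<Sum>x\<in>missing. g x) \<le> (\<Sum>x\<in>missing. h x) + k * Q"
  using sum_mono[of missing g "\<lambda>x. h x + Q"] assms card_missing
  by (simp add: sum.distrib)

lemma sum_missing_nbhd_deg_count_le_trunc:
  "(\<Sum>x\<in>missing. nbhd_deg_count V E T x) \<le> (\<Sum>x\<in>missing. trunc_nbhd_deg_count V E Q T x) + k * Q"
proof (rule sum_missing_le_sum_diff)
  fix x
  show "nbhd_deg_count V E T x \<le> trunc_nbhd_deg_count V E Q T x + Q"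
    using nbhd_deg_count_le_deg[OF graph, of T x] by (simp add: trunc_nbhd_deg_count_def)
qed

lemma sum_missing_trunc_le_nbhd_deg_count:
  "(\<Sum>x\<in>missing. trunc_nbhd_deg_count V E Q T x) \<le> (\<Sum>x\<in>missing. nbhd_deg_count V E T x)"
  by (intro sum_mono) (simp add: trunc_nbhd_deg_count_def)

lemma card_nonadjacent_deg:
  "card {x\<in>V. \<exists>z\<in>V. deg V E z = T \<and> x \<notin> nbhd V E z} \<le> deg_count V E T * (n - T)"
proof -
  define X where "X = {z\<in>V. deg V E z = T}"
  have "card {x\<in>V. \<exists>z\<in>V. deg V E z = T \<and> x \<notin> nbhd V E z} \<le> card (\<Union>z\<in>X. V - nbhd V E z)"
    using finite_vertices[OF graph] unfolding X_def by (intro card_mono) auto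
  also have "\<dots> \<le> (\<Sum>z\<in>X. card (V - nbhd V E z))"
    using finite_vertices[OF graph] unfolding X_def by (intro card_UN_le) simp
  also have "\<dots> = (\<Sum>z\<in>X. n - T)"
  proof (rule sum.cong[OF refl])
    fix z assume "z \<in> X"
    then show "card (V - nbhd V E z) = n - T"
      using card_Diff_subset[OF finite_nbhd[OF graph] nbhd_subset] card_V
      unfolding X_def by (simp add: deg_eq_card_nbhd)
  qed
  finally show ?thesis
    by (simp add: X_def deg_count_def)
qed

end

section \<open>Two graphs sharing \<open>n - k\<close> cards\<close>

locale shared_cards =
  G: partial_deck VG EG n k d u + H: partial_deck VH EH n k d w
  for VG :: "'a set" and EG and VH :: "'b set" and EH and n k d u w +
  assumes n_ge_3: "3 \<le> n" and d_pos: "1 \<le> d" and k_small: "k * (10000 * d ^ 3) \<le> n"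
    and cards_iso: "\<forall>i<n - k. graph_iso (del_vert_V VG (u i)) (del_vert_E EG (u i))
                              (del_vert_V VH (w i)) (del_vert_E EH (w i))"
begin

lemma card_iso_at:
  assumes "j < n - k"
  obtains f where "card_iso VG EG VH EH (u j) (w j) f"
  using graph_iso_imp_card_iso[OF G.graph H.graph _ _ cards_iso[rule_format, OF assms]]
    G.u_in H.u_in assms
  by blast

lemma size_bounds:
  assumes "1 \<le> k"
  shows "k \<le> k * d" "d \<le> k * d" "k * d \<le> k * d ^ 2" "k * d ^ 2 \<le> k * d ^ 3"
    "10000 * (k * d ^ 3) \<le> n"
  using assms d_pos k_small by (simp_all add: power2_eq_square power3_eq_cube algebra_simps)

text \<open>By \<open>deg_offset_card\<close> every card gives the same value; the card with index 0 exists as \<open>k < n\<close>.\<close>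
definition deg_offset :: int where
  "deg_offset = int (deg VG EG (u 0)) - int (deg VH EH (w 0))"

lemma n_minus_k_pos: "0 < n - k"
proof (cases "k = 0")
  case False
  then show ?thesis
    using size_bounds by linarith
qed (use n_ge_3 in simp)

lemma deg_sum_card: "j < n - k \<Longrightarrow>
    int (\<Sum>x\<in>VG. deg VG EG x) - 2 * int (deg VG EG (u j))
  = int (\<Sum>y\<in>VH. deg VH EH y) - 2 * int (deg VH EH (w j))"
  by (metis card_iso_at card_iso.degree_sum_card)

lemma deg_offset_card: "j < n - k \<Longrightarrow> int (deg VG EG (u j)) - int (deg VH EH (w j)) = deg_offset"
  using deg_sum_card[of j] deg_sum_card[OF n_minus_k_pos] unfolding deg_offset_def by linarith

lemma missing_deg_sum_offset:
  "(int (n - k) - 2) * deg_offset = int (\<Sum>x\<in>H.missing. deg VH EH x) - int (\<Sum>x\<in>G.missing. deg VG EG x)"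
proof -
  have "(\<Sum>j<n - k. int (deg VG EG (u j)) - int (deg VH EH (w j))) = int (n - k) * deg_offset"
    using deg_offset_card by simp
  moreover have "2 * deg_offset = int (\<Sum>x\<in>VG. deg VG EG x) - int (\<Sum>y\<in>VH. deg VH EH y)"
    using deg_sum_card[OF n_minus_k_pos] unfolding deg_offset_def by (simp add: algebra_simps)
  ultimately show ?thesis
    using G.sum_split[of "deg VG EG"] H.sum_split[of "deg VH EH"]
    by (simp add: sum_subtractf algebra_simps flip: of_nat_sum)
qed

lemma exists_low_deg_card:
  assumes "1 \<le> k"
  obtains j where "j < n - k" "deg VG EG (u j) \<le> 3 * d" "deg VH EH (w j) \<le> 3 * d"
proof -
  define A where "A = {j\<in>{..<n - k}. 3 * d < deg VG EG (u j)}"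
  define B where "B = {j\<in>{..<n - k}. 3 * d < deg VH EH (w j)}"
  have "card (A \<union> B) \<le> card A + card B"
    by (rule card_Un_le)
  also have "\<dots> < n - k"
    using G.card_cards_deg_gt[of 3] H.card_cards_deg_gt[of 3] size_bounds[OF assms] assms
    unfolding A_def B_def by linarith
  finally have "\<not> {..<n - k} \<subseteq> A \<union> B"
    using card_mono[of "A \<union> B" "{..<n - k}"] by (auto simp: A_def B_def)
  with that show ?thesis
    unfolding A_def B_def by force
qed

lemma abs_sum_cards_excess_diff_le:
  "\<bar>\<Sum>j<n - k. int (deg VG EG (u j) - Q) - int (deg VH EH (w j) - Q)\<bar>
     \<le> \<bar>deg_offset\<bar> * int (card {j\<in>{..<n - k}. Q < deg VG EG (u j)} + card {j\<in>{..<n - k}. Q < deg VH EH (w j)})"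
proof -
  have "\<bar>int (deg VG EG (u j) - Q) - int (deg VH EH (w j) - Q)\<bar>
      \<le> \<bar>deg_offset\<bar> * (of_bool (Q < deg VG EG (u j)) + of_bool (Q < deg VH EH (w j)))"
    if "j < n - k" for j
    using deg_offset_card[OF that] by (cases "Q < deg VG EG (u j)"; cases "Q < deg VH EH (w j)") auto
  then have "\<bar>\<Sum>j<n - k. int (deg VG EG (u j) - Q) - int (deg VH EH (w j) - Q)\<bar>
      \<le> (\<Sum>j<n - k. \<bar>deg_offset\<bar> * (of_bool (Q < deg VG EG (u j)) + of_bool (Q < deg VH EH (w j))))"
    by (intro order.trans[OF sum_abs sum_mono]) auto
  also have "\<dots> = \<bar>deg_offset\<bar> * int (card {j\<in>{..<n - k}. Q < deg VG EG (u j)} + card {j\<in>{..<n - k}. Q < deg VH EH (w j)})"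
    by (simp add: sum.distrib Int_def flip: sum_distrib_left)
  finally show ?thesis .
qed

text \<open>Through a card whose two vertices have degree at most \<open>3 d\<close>, the total excess over
  \<open>Q = 4 d\<close> of the degrees in \<open>G\<close> and in \<open>H\<close> agree up to \<open>6 d\<close>; on the cards, the excesses
  differ by the offset at most at the few cards of degree above \<open>Q\<close>.\<close>
lemma abs_missing_deg_sum_diff_le:
  assumes k: "1 \<le> k"
  shows "\<bar>int (\<Sum>x\<in>H.missing. deg VH EH x) - int (\<Sum>x\<in>G.missing. deg VG EG x)\<bar>
    \<le> \<bar>deg_offset\<bar> * int (card {j\<in>{..<n - k}. 4 * d < deg VG EG (u j)} + card {j\<in>{..<n - k}. 4 * d < deg VH EH (w j)})
       + 10 * int (k * d)"
proof -
  obtain j0 where j0: "j0 < n - k" "deg VG EG (u j0) \<le> 3 * d" "deg VH EH (w j0) \<le> 3 * d"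
    using exists_low_deg_card[OF k] by blast
  obtain f where f: "card_iso VG EG VH EH (u j0) (w j0) f"
    using card_iso_at[OF j0(1)] by blast
  define Q where "Q = 4 * d"
  define XG where "XG = (\<Sum>j<n - k. deg VG EG (u j) - Q)"
  define XH where "XH = (\<Sum>j<n - k. deg VH EH (w j) - Q)"
  define OG where "OG = (\<Sum>x\<in>G.missing. deg VG EG x - Q)"
  define OH where "OH = (\<Sum>x\<in>H.missing. deg VH EH x - Q)"
  define RG where "RG = (\<Sum>x\<in>G.missing. deg VG EG x)"
  define RH where "RH = (\<Sum>x\<in>H.missing. deg VH EH x)"
  have "\<bar>int (XG + OG) - int (XH + OH)\<bar> \<le> int (6 * d)"
    using card_iso.sum_excess_transfer[OF f, of Q] j0
      G.sum_split[of "\<lambda>x. deg VG EG x - Q"] H.sum_split[of "\<lambda>x. deg VH EH x - Q"]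
    unfolding Q_def XG_def XH_def OG_def OH_def by linarith
  moreover have "OG \<le> RG" "RG \<le> OG + k * Q" "OH \<le> RH" "RH \<le> OH + k * Q"
    unfolding OG_def OH_def RG_def RH_def
    by (auto intro: sum_mono G.sum_missing_le_sum_diff H.sum_missing_le_sum_diff)
  moreover have "k * Q = 4 * (k * d)" "d \<le> k * d"
    unfolding Q_def using size_bounds[OF k] by simp_all
  moreover have "\<bar>int XG - int XH\<bar>
      \<le> \<bar>deg_offset\<bar> * int (card {j\<in>{..<n - k}. Q < deg VG EG (u j)} + card {j\<in>{..<n - k}. Q < deg VH EH (w j)})"
    using abs_sum_cards_excess_diff_le[of Q] unfolding XG_def XH_def by (simp add: sum_subtractf)
  ultimately show ?thesis
    unfolding RG_def[symmetric] RH_def[symmetric] Q_def[symmetric] by linarith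
qed

lemma deg_offset_eq_0: "deg_offset = 0"
proof (cases "k = 0")
  case True
  then have "G.missing = {}" "H.missing = {}"
    using G.card_missing H.card_missing G.finite_missing H.finite_missing by auto
  then show ?thesis
    using missing_deg_sum_offset True n_ge_3 by simp
next
  case False
  then have k: "1 \<le> k" by simp
  define CG where "CG = card {j\<in>{..<n - k}. 4 * d < deg VG EG (u j)}"
  define CH where "CH = card {j\<in>{..<n - k}. 4 * d < deg VH EH (w j)}"
  define Y where "Y = int (n - k) - 2 - int (CG + CH)"
  have "0 \<le> int (n - k) - 2"
    using size_bounds[OF k] k by linarith
  then have "(int (n - k) - 2) * \<bar>deg_offset\<bar> \<le> \<bar>deg_offset\<bar> * int (CG + CH) + 10 * int (k * d)"
    using missing_deg_sum_offset abs_missing_deg_sum_diff_le[OF k]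
    unfolding CG_def CH_def by (simp add: abs_mult)
  then have "Y * \<bar>deg_offset\<bar> \<le> 10 * int (k * d)"
    unfolding Y_def by (simp add: algebra_simps)
  moreover have "4 * CG \<le> n" "4 * CH \<le> n"
    using G.card_cards_deg_gt[of 4] H.card_cards_deg_gt[of 4] unfolding CG_def CH_def by simp_all
  then have "10 * int (k * d) < Y"
    unfolding Y_def using size_bounds[OF k] k by linarith
  ultimately have "Y * \<bar>deg_offset\<bar> < Y" "0 < Y"
    using of_nat_0_le_iff[of "k * d"] by linarith+
  then show ?thesis
    using mult_less_cancel_left2[of Y "\<bar>deg_offset\<bar>"] by simp
qed

lemma cards_deg_eq: "j < n - k \<Longrightarrow> deg VG EG (u j) = deg VH EH (w j)"
  using deg_offset_card deg_offset_eq_0 by fastforce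

definition deg_ge_gap :: "nat \<Rightarrow> int" where
  "deg_ge_gap T = int (deg_ge_count VG EG T) - int (deg_ge_count VH EH T)"

lemma deg_ge_gap_card:
  assumes "j < n - k"
  shows "deg_ge_gap T = int (nbhd_deg_count VG EG T (u j)) - int (nbhd_deg_count VH EH T (w j))"
proof -
  obtain f where "card_iso VG EG VH EH (u j) (w j) f"
    using card_iso_at[OF assms] .
  then show ?thesis
    using card_iso.deg_ge_count_card[of VG EG VH EH "u j" "w j" f T] cards_deg_eq[OF assms]
    unfolding deg_ge_gap_def by simp
qed

lemma deg_ge_gap_Suc:
  "deg_ge_gap T - deg_ge_gap (Suc T) = int (deg_count VG EG T) - int (deg_count VH EH T)"
  using deg_ge_count_Suc[OF G.graph, of T] deg_ge_count_Suc[OF H.graph, of T]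
  unfolding deg_ge_gap_def by simp

text \<open>Sum the card relation over all cards and count pairs (vertex, neighbour of degree \<open>T\<close>) twice.\<close>
lemma deg_ge_gap_recurrence:
  "int (n - k) * deg_ge_gap T = int T * (deg_ge_gap T - deg_ge_gap (Suc T))
     - int (\<Sum>x\<in>G.missing. nbhd_deg_count VG EG T x) + int (\<Sum>x\<in>H.missing. nbhd_deg_count VH EH T x)"
proof -
  have "int (n - k) * deg_ge_gap T
      = (\<Sum>j<n - k. int (nbhd_deg_count VG EG T (u j))) - (\<Sum>j<n - k. int (nbhd_deg_count VH EH T (w j)))"
  proof -
    have "(\<Sum>j<n - k. deg_ge_gap T)
        = (\<Sum>j<n - k. int (nbhd_deg_count VG EG T (u j)) - int (nbhd_deg_count VH EH T (w j)))"
      using deg_ge_gap_card by (intro sum.cong) auto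
    then show ?thesis
      by (simp add: sum_subtractf)
  qed
  also have "\<dots> = int T * int (deg_count VG EG T) - int (\<Sum>x\<in>G.missing. nbhd_deg_count VG EG T x)
      - (int T * int (deg_count VH EH T) - int (\<Sum>x\<in>H.missing. nbhd_deg_count VH EH T x))"
    using G.sum_split[of "nbhd_deg_count VG EG T"] H.sum_split[of "nbhd_deg_count VH EH T"]
      sum_nbhd_deg_count[OF G.graph, of T] sum_nbhd_deg_count[OF H.graph, of T]
    by (simp flip: of_nat_sum of_nat_mult)
  finally show ?thesis
    by (simp add: deg_ge_gap_Suc algebra_simps)
qed

lemma deg_ge_gap_eq_0_middle:
  assumes gap_Suc: "deg_ge_gap (Suc T) = 0"
    and T_mid: "int (k * d * n) < int T * (int n - int k - int T)"
  shows "deg_ge_gap T = 0"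
proof (rule ccontr)
  assume "deg_ge_gap T \<noteq> 0"
  define Z where "Z = int T * (int n - int k - int T)"
  define eG where "eG = (\<Sum>x\<in>G.missing. nbhd_deg_count VG EG T x)"
  define eH where "eH = (\<Sum>x\<in>H.missing. nbhd_deg_count VH EH T x)"
  have "(int n - int k - int T) * deg_ge_gap T = int eH - int eG"
    using deg_ge_gap_recurrence[of T] gap_Suc G.k_le_n
    unfolding eG_def eH_def by (simp add: of_nat_diff algebra_simps)
  then have "Z * deg_ge_gap T = int T * int eH - int T * int eG"
    unfolding Z_def by (metis mult.assoc right_diff_distrib)
  moreover have "T * eG \<le> k * d * n" "T * eH \<le> k * d * n"
    using G.sum_missing_nbhd_deg_count_mult_le[of T] H.sum_missing_nbhd_deg_count_mult_le[of T]
    unfolding eG_def eH_def by (simp_all add: mult.assoc)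
  then have "int T * int eG \<le> int (k * d * n)" "int T * int eH \<le> int (k * d * n)"
    by (simp_all only: of_nat_mult[symmetric] of_nat_le_iff)
  moreover have "0 \<le> int T * int eG" "0 \<le> int T * int eH"
    by simp_all
  ultimately have "\<bar>Z * deg_ge_gap T\<bar> \<le> int (k * d * n)"
    unfolding abs_le_iff by linarith
  moreover have "0 < Z"
    using T_mid of_nat_0_le_iff[of "k * d * n"] unfolding Z_def by linarith
  then have "Z * 1 \<le> \<bar>Z\<bar> * \<bar>deg_ge_gap T\<bar>"
    using \<open>deg_ge_gap T \<noteq> 0\<close> by (intro mult_mono) auto
  then have "Z \<le> \<bar>Z * deg_ge_gap T\<bar>"
    by (simp add: abs_mult)
  ultimately show False
    using T_mid unfolding Z_def by linarith
qed

lemma sum_cards_trunc_diff: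
  "(\<Sum>j<n - k. int (trunc_nbhd_deg_count VG EG Q T (u j)) - int (trunc_nbhd_deg_count VH EH Q T (w j)))
     = int (card {j\<in>{..<n - k}. Q \<le> deg VG EG (u j)}) * deg_ge_gap T"
proof -
  have "(\<Sum>j<n - k. int (trunc_nbhd_deg_count VG EG Q T (u j)) - int (trunc_nbhd_deg_count VH EH Q T (w j)))
      = (\<Sum>j<n - k. of_bool (Q \<le> deg VG EG (u j)) * deg_ge_gap T)"
    using deg_ge_gap_card cards_deg_eq by (intro sum.cong) (auto simp: trunc_nbhd_deg_count_def)
  also have "\<dots> = int (card {j\<in>{..<n - k}. Q \<le> deg VG EG (u j)}) * deg_ge_gap T"
    by (simp add: Int_def flip: sum_distrib_right)
  finally show ?thesis .
qed

text \<open>For small \<open>T\<close> the missing vertices may carry many neighbours of degree \<open>T\<close>, so only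
  the vertices of degree at least \<open>Q = 8 d\<close> are counted: their counts on \<open>G\<close> and \<open>H\<close> are
  compared through a card of small degree, and few cards have degree at least \<open>Q\<close>.\<close>
lemma abs_weighted_deg_ge_gap_le:
  assumes k: "1 \<le> k" and gap_Suc: "deg_ge_gap (Suc T) = 0"
  shows "\<bar>(int (n - k) - int T - int (card {j\<in>{..<n - k}. 8 * d \<le> deg VG EG (u j)})) * deg_ge_gap T\<bar>
    \<le> int (k * (8 * d) + 6 * d * (8 * d + T + 2))"
proof -
  obtain j0 where j0: "j0 < n - k" "deg VG EG (u j0) \<le> 3 * d" "deg VH EH (w j0) \<le> 3 * d"
    using exists_low_deg_card[OF k] by blast
  obtain f where f: "card_iso VG EG VH EH (u j0) (w j0) f"
    using card_iso_at[OF j0(1)] by blast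
  define Q where "Q = 8 * d"
  define cG where "cG = (\<Sum>j<n - k. trunc_nbhd_deg_count VG EG Q T (u j))"
  define cH where "cH = (\<Sum>j<n - k. trunc_nbhd_deg_count VH EH Q T (w j))"
  define mG where "mG = (\<Sum>x\<in>G.missing. trunc_nbhd_deg_count VG EG Q T x)"
  define mH where "mH = (\<Sum>x\<in>H.missing. trunc_nbhd_deg_count VH EH Q T x)"
  define eG where "eG = (\<Sum>x\<in>G.missing. nbhd_deg_count VG EG T x)"
  define eH where "eH = (\<Sum>x\<in>H.missing. nbhd_deg_count VH EH T x)"
  define g where "g = deg_ge_gap T"
  define kQ where "kQ = k * Q"
  have "\<bar>int (cG + mG) - int (cH + mH)\<bar> \<le> int ((deg VG EG (u j0) + deg VH EH (w j0)) * (Q + T + 2))"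
    using card_iso.sum_trunc_nbhd_deg_count_transfer[OF f, of Q T] j0 d_pos
      G.sum_split[of "trunc_nbhd_deg_count VG EG Q T"] H.sum_split[of "trunc_nbhd_deg_count VH EH Q T"]
    unfolding cG_def cH_def mG_def mH_def Q_def by simp
  also have "\<dots> \<le> int (6 * d * (Q + T + 2))"
    using j0 by (simp only: of_nat_le_iff) (intro mult_le_mono1, linarith)
  finally have transfer: "\<bar>int (cG + mG) - int (cH + mH)\<bar> \<le> int (6 * d * (Q + T + 2))" .
  have "int cG - int cH = int (card {j\<in>{..<n - k}. Q \<le> deg VG EG (u j)}) * g"
    using sum_cards_trunc_diff[of Q T] unfolding cG_def cH_def g_def by (simp add: sum_subtractf)
  moreover have "int (n - k) * g = int T * g - int eG + int eH"
    using deg_ge_gap_recurrence[of T] gap_Suc unfolding eG_def eH_def g_def by simp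
  ultimately have "(int (n - k) - int T - int (card {j\<in>{..<n - k}. Q \<le> deg VG EG (u j)})) * g
      = (int eH - int mH) - (int eG - int mG) + (int (cH + mH) - int (cG + mG))"
    by (simp add: algebra_simps)
  moreover have "mG \<le> eG" "eG \<le> mG + kQ" "mH \<le> eH" "eH \<le> mH + kQ"
    unfolding mG_def mH_def eG_def eH_def kQ_def
    by (rule G.sum_missing_trunc_le_nbhd_deg_count G.sum_missing_nbhd_deg_count_le_trunc
        H.sum_missing_trunc_le_nbhd_deg_count H.sum_missing_nbhd_deg_count_le_trunc)+
  ultimately show ?thesis
    using transfer unfolding g_def kQ_def Q_def by linarith
qed

lemma deg_ge_gap_eq_0_low:
  assumes k: "1 \<le> k" and T_low: "T \<le> 10 * (k * d)" and gap_Suc: "deg_ge_gap (Suc T) = 0"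
  shows "deg_ge_gap T = 0"
proof (rule ccontr)
  assume gap: "deg_ge_gap T \<noteq> 0"
  define W where "W = int (n - k) - int T - int (card {j\<in>{..<n - k}. 8 * d \<le> deg VG EG (u j)})"
  have "d * d \<le> k * d ^ 2" "d * T \<le> 10 * (k * d ^ 2)"
    using k mult_le_mono2[OF T_low, of d] by (simp_all add: power2_eq_square algebra_simps)
  moreover have "k * (8 * d) + 6 * d * (8 * d + T + 2) = 8 * (k * d) + 48 * (d * d) + 6 * (d * T) + 12 * d"
    by (simp add: algebra_simps)
  ultimately have "\<bar>W * deg_ge_gap T\<bar> \<le> 128 * int (k * d ^ 2)"
    using abs_weighted_deg_ge_gap_le[OF k gap_Suc] size_bounds[OF k] unfolding W_def by linarith
  moreover have "8 * card {j\<in>{..<n - k}. 8 * d \<le> deg VG EG (u j)} \<le> n"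
    using G.card_cards_deg_ge[of "8 * d"] d_pos by (simp add: algebra_simps)
  then have "128 * int (k * d ^ 2) < W"
    unfolding W_def using T_low size_bounds[OF k] k by linarith
  moreover have "W * 1 \<le> \<bar>W\<bar> * \<bar>deg_ge_gap T\<bar>"
    using gap by (intro mult_mono) auto
  ultimately show False
    unfolding abs_mult by linarith
qed

text \<open>For \<open>T\<close> close to \<open>n\<close> there are at most \<open>2 d\<close> vertices of degree \<open>T\<close>, each missing few
  neighbours, so some card vertex in each graph is adjacent to all of them.\<close>
lemma deg_ge_gap_eq_0_high:
  assumes k: "1 \<le> k" and T_high: "n - k - 2 * (k * d) - 1 \<le> T"
  shows "deg_ge_gap (Suc T) = 0"
proof -
  define bG where "bG = {x\<in>VG. \<exists>z\<in>VG. deg VG EG z = T \<and> x \<notin> nbhd VG EG z}"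
  define bH where "bH = {x\<in>VH. \<exists>z\<in>VH. deg VH EH z = T \<and> x \<notin> nbhd VH EH z}"
  have n_T: "n < 2 * T" "n - T \<le> k + 2 * (k * d) + 1"
    using T_high size_bounds[OF k] k by linarith+
  have "2 * d * (k + 2 * (k * d) + 1) = 2 * (k * d) + 4 * (k * d ^ 2) + 2 * d"
    by (simp add: algebra_simps power2_eq_square)
  then have "2 * d * (k + 2 * (k * d) + 1) \<le> 8 * (k * d ^ 2)"
    using size_bounds[OF k] by linarith
  then have "card bG \<le> 8 * (k * d ^ 2)" "card bH \<le> 8 * (k * d ^ 2)"
    using G.card_nonadjacent_deg[of T] H.card_nonadjacent_deg[of T]
      mult_le_mono[OF G.deg_count_le_2d[OF n_T(1)] n_T(2)] mult_le_mono[OF H.deg_count_le_2d[OF n_T(1)] n_T(2)]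
    unfolding bG_def bH_def by linarith+
  moreover define AG where "AG = {j\<in>{..<n - k}. u j \<in> bG}"
  moreover define AH where "AH = {j\<in>{..<n - k}. w j \<in> bH}"
  moreover have "card AG \<le> card bG" "card AH \<le> card bH"
    using G.card_cards_le[of "\<lambda>x. x \<in> bG"] H.card_cards_le[of "\<lambda>x. x \<in> bH"]
    unfolding AG_def AH_def bG_def bH_def by (simp_all add: Collect_conj_eq Int_absorb1 subset_eq)
  ultimately have "card (AG \<union> AH) < card {..<n - k}"
    using card_Un_le[of AG AH] size_bounds[OF k] k card_lessThan[of "n - k"] by linarith
  then have "\<not> {..<n - k} \<subseteq> AG \<union> AH"
    using card_mono[of "AG \<union> AH" "{..<n - k}"] by (auto simp: AG_def AH_def)
  then obtain j where j: "j < n - k" "u j \<notin> bG" "w j \<notin> bH"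
    unfolding AG_def AH_def by blast
  then have "nbhd_deg_count VG EG T (u j) = deg_count VG EG T" "nbhd_deg_count VH EH T (w j) = deg_count VH EH T"
    using G.u_in H.u_in unfolding bG_def bH_def
    by (auto intro!: nbhd_deg_count_eq_deg_count[OF G.graph] nbhd_deg_count_eq_deg_count[OF H.graph])
  then show ?thesis
    using deg_ge_gap_card[OF j(1), of T] deg_ge_gap_Suc[of T] by simp
qed

lemma middle_range_bound:
  assumes k: "1 \<le> k" and T: "10 * (k * d) < T" "T + 2 * (k * d) + 1 \<le> n - k"
  shows "int (k * d * n) < int T * (int n - int k - int T)"
proof -
  define K where "K = int (k * d)"
  define M where "M = int n - int k - int T"
  have "0 \<le> K" "10 * K + 1 \<le> int T" "2 * K + 1 \<le> M" "10000 * K \<le> int n" "int k \<le> K"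
    using T size_bounds[OF k] unfolding K_def M_def by linarith+
  then have "K * int n < int T * M"
  proof (cases "2 * T \<le> n")
    case True
    then have "2 * int T \<le> int n"
      by simp
    then have "int n \<le> 10 * int n - 10 * int k - 10 * int T"
      using \<open>10000 * K \<le> int n\<close> \<open>int k \<le> K\<close> \<open>0 \<le> K\<close> by linarith
    then have "int n \<le> 10 * M"
      unfolding M_def by (simp add: algebra_simps)
    then have "K * int n \<le> K * (10 * M)"
      using \<open>0 \<le> K\<close> by (rule mult_left_mono)
    moreover have "(10 * K + 1) * M \<le> int T * M"
      using \<open>10 * K + 1 \<le> int T\<close> \<open>2 * K + 1 \<le> M\<close> \<open>0 \<le> K\<close> by (intro mult_right_mono) simp_all
    ultimately show ?thesis
      using \<open>2 * K + 1 \<le> M\<close> \<open>0 \<le> K\<close> by (simp add: algebra_simps)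
  next
    case False
    then have "K * int n \<le> K * (2 * int T)"
      using \<open>0 \<le> K\<close> by (intro mult_left_mono) simp_all
    moreover have "int T * (2 * K + 1) \<le> int T * M"
      using \<open>2 * K + 1 \<le> M\<close> by (intro mult_left_mono) simp_all
    ultimately show ?thesis
      using \<open>10 * K + 1 \<le> int T\<close> \<open>0 \<le> K\<close> by (simp add: algebra_simps)
  qed
  then show ?thesis
    unfolding K_def M_def by simp
qed

lemma deg_ge_gap_eq_0_step:
  assumes "T < n" and gap_Suc: "deg_ge_gap (Suc T) = 0"
  shows "deg_ge_gap T = 0"
proof -
  consider (zero) "T = 0" | (k0) "0 < T" "k = 0" | (low) "k \<ge> 1" "T \<le> 10 * (k * d)"
    | (high) "k \<ge> 1" "0 < T" "n - k - 2 * (k * d) - 1 \<le> T - 1"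
    | (mid) "k \<ge> 1" "10 * (k * d) < T" "T + 2 * (k * d) + 1 \<le> n - k"
    by linarith
  then show ?thesis
  proof cases
    case zero
    then show ?thesis
      using G.card_V H.card_V by (simp add: deg_ge_gap_def deg_ge_count_def)
  next
    case k0
    have "0 < int T * (int n - int k - int T)"
      using k0 assms(1) by (intro mult_pos_pos) simp_all
    with k0 show ?thesis
      using deg_ge_gap_eq_0_middle[OF gap_Suc] by simp
  next
    case low
    then show ?thesis
      using gap_Suc by (rule deg_ge_gap_eq_0_low)
  next
    case high
    then have "deg_ge_gap (Suc (T - 1)) = 0"
      by (intro deg_ge_gap_eq_0_high) simp_all
    with high show ?thesis
      by simp
  next
    case mid
    then show ?thesis
      using deg_ge_gap_eq_0_middle[OF gap_Suc middle_range_bound] by simp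
  qed
qed

lemma deg_ge_gap_eq_0_large: "n \<le> T \<Longrightarrow> deg_ge_gap T = 0"
  using deg_ge_count_eq_0[OF G.graph, of T] deg_ge_count_eq_0[OF H.graph, of T] G.card_V H.card_V
  unfolding deg_ge_gap_def by simp

lemma deg_ge_gap_eq_0: "deg_ge_gap T = 0"
proof (cases "n \<le> T")
  case False
  then have "T \<le> n" by simp
  then show ?thesis
  proof (induction T rule: inc_induct)
    case base
    show ?case
      by (rule deg_ge_gap_eq_0_large) simp
  next
    case (step T)
    show ?case
      using step.hyps(2) step.IH by (rule deg_ge_gap_eq_0_step)
  qed
qed (rule deg_ge_gap_eq_0_large)

lemma degree_seq_eq: "degree_seq VG EG = degree_seq VH EH"
  using degree_seq_eqI[OF G.graph H.graph] deg_ge_gap_eq_0 by (simp add: deg_ge_gap_def)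

end

theorem theorem1p1:
  fixes VG :: "'a set" and EG :: "'a set set"
    and VH :: "'b set" and EH :: "'b set set"
    and d n k :: nat and u :: "nat \<Rightarrow> 'a" and w :: "nat \<Rightarrow> 'b"
  assumes "simple_graph VG EG" and "simple_graph VH EH"
    and "card VG = n" and "card VH = n" and "n \<ge> 3"
    and "real k * (10^4 * real d ^ 3) \<le> real n"
    and "real (\<Sum>v\<in>VG. deg VG EG v) / real n \<le> real d"
    and "real (\<Sum>v\<in>VH. deg VH EH v) / real n \<le> real d"
    and "inj_on u {..<n - k}" and "u ` {..<n - k} \<subseteq> VG"
    and "inj_on w {..<n - k}" and "w ` {..<n - k} \<subseteq> VH"
    and "\<forall>i<n - k. graph_iso (del_vert_V VG (u i)) (del_vert_E EG (u i))
                            (del_vert_V VH (w i)) (del_vert_E EH (w i))"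
  shows "degree_seq VG EG = degree_seq VH EH"
proof -
  have "real (\<Sum>v\<in>VG. deg VG EG v) \<le> real (d * n)" "real (\<Sum>v\<in>VH. deg VH EH v) \<le> real (d * n)"
    using assms(5,7,8) by (simp_all add: pos_divide_le_eq)
  then have deg_sums: "(\<Sum>v\<in>VG. deg VG EG v) \<le> d * n" "(\<Sum>v\<in>VH. deg VH EH v) \<le> d * n"
    by (simp_all only: of_nat_le_iff)
  show ?thesis
  proof (cases "d = 0")
    case True
    then show ?thesis
      using deg_sums degree_seq_deg_sum_eq_0[OF assms(1)] degree_seq_deg_sum_eq_0[OF assms(2)] assms(3,4)
      by simp
  next
    case False
    have "real (k * (10000 * d ^ 3)) \<le> real n"
      using assms(6) by simp
    then have k_small: "k * (10000 * d ^ 3) \<le> n"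
      by (simp only: of_nat_le_iff)
    moreover have "k \<le> n"
      using k_small False le_trans[of k "k * (10000 * d ^ 3)" n] by simp
    ultimately interpret shared_cards VG EG VH EH n k d u w
      using assms deg_sums False by unfold_locales simp_all
    show ?thesis
      by (rule degree_seq_eq)
  qed
qed

end
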